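(* Let $f$ and $\ell$ be continuous and $\mathbb{X}\times\mathbb{U}$ be compact, and let strict dissipativity hold, i.e., there exist a bounded storage function $\lambda:\mathbb{X}\to\mathbb{R}$ and $\underline\alpha_{\tilde\ell}\in\mathcal{K}_\infty$ such that $\tilde\ell(x,u)=\ell(x,u)-\ell^\star+\lambda(x)-\lambda(f(x,u))\geq\underline\alpha_{\tilde\ell}(\|(x,u)\|_{\Pi^\star})$ for all $x\in\mathbb{X}$ and all $u\in\mathbb{U}$ with $f(x,u)\in\mathbb{X}$. Then there exists $\alpha_1\in\mathcal{K}_\infty$ such that for all $\varepsilon>0$ and all trajectories of length $T$ defined by $\hat x\in\mathbb{X}$ and $\hat u\in\mathbb{U}^T(\hat x)$ satisfying $\|(x_{\hat u}(k,\hat x),\hat u(k))\|_{\Pi^\star}\leq\varepsilon$ for all $k\in\{0,\dots,T-1\}$, it holds that \[ \sum_{k=0}^{T-1}\ell(x_{\hat u}(k,\hat x),\hat u(k))\leq (T+p^\star-1)\ell^\star+T\alpha_1(\varepsilon). \]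
   Context: System $x(k+1)=f(x(k),u(k))$ with constraints $x\in\mathbb{X}$, $u\in\mathbb{U}$, stage cost $\ell$; $x_u(k,x)$ is the state trajectory under input sequence $u$ from $x$, and $\mathbb{U}^T(x)$ the set of feasible input sequences of length $T$. A feasible $p$-periodic orbit is a $p$-tuple $\Pi\in(\mathbb{X}\times\mathbb{U})^p$ with $\Pi_{\mathbb{X}}((k+1)\bmod p)=f(\Pi(k))$; $\|(x,u)\|_\Pi=\min_k\|(x,u)-\Pi(k)\|$. $\ell^\star$ is the infimum over all feasible periodic orbits of the average cost $\frac1p\sum_{k=0}^{p-1}\ell(\Pi(k))$, and $\Pi^\star$ is an optimal orbit of period $p^\star$ attaining it. The stage cost $\ell$ is assumed non-negative without loss of generality (shifting $\ell$ by its minimum on the compact set does not change minimizers). *)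

theory Defs
  imports "HOL-Analysis.Analysis"
begin

fun traj :: "('x \<Rightarrow> 'u \<Rightarrow> 'x) \<Rightarrow> (nat \<Rightarrow> 'u) \<Rightarrow> 'x \<Rightarrow> nat \<Rightarrow> 'x" where
  "traj f u x 0 = x"
| "traj f u x (Suc k) = f (traj f u x k) (u k)"

definition feasible_inputs ::
  "'x set \<Rightarrow> 'u set \<Rightarrow> ('x \<Rightarrow> 'u \<Rightarrow> 'x) \<Rightarrow> nat \<Rightarrow> 'x \<Rightarrow> (nat \<Rightarrow> 'u) set" where
  "feasible_inputs X U f T x =
     {u. (\<forall>k<T. u k \<in> U) \<and> (\<forall>k\<le>T. traj f u x k \<in> X)}"

definition feasible_orbit ::
  "'x set \<Rightarrow> 'u set \<Rightarrow> ('x \<Rightarrow> 'u \<Rightarrow> 'x) \<Rightarrow> nat \<Rightarrow> (nat \<Rightarrow> 'x \<times> 'u) \<Rightarrow> bool" where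
  "feasible_orbit X U f p Orb \<longleftrightarrow> p > 0 \<and>
     (\<forall>k<p. fst (Orb k) \<in> X \<and> snd (Orb k) \<in> U) \<and>
     (\<forall>k<p. fst (Orb (Suc k mod p)) = f (fst (Orb k)) (snd (Orb k)))"

definition avg_cost :: "('x \<Rightarrow> 'u \<Rightarrow> real) \<Rightarrow> nat \<Rightarrow> (nat \<Rightarrow> 'x \<times> 'u) \<Rightarrow> real" where
  "avg_cost l p Orb = (\<Sum>k<p. l (fst (Orb k)) (snd (Orb k))) / real p"

definition ell_star ::
  "'x set \<Rightarrow> 'u set \<Rightarrow> ('x \<Rightarrow> 'u \<Rightarrow> 'x) \<Rightarrow> ('x \<Rightarrow> 'u \<Rightarrow> real) \<Rightarrow> real" where
  "ell_star X U f l = Inf {avg_cost l p Orb | p Orb. feasible_orbit X U f p Orb}"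

definition orbit_dist ::
  "nat \<Rightarrow> (nat \<Rightarrow> 'a::real_normed_vector) \<Rightarrow> 'a \<Rightarrow> real" where
  "orbit_dist p Orb z = Min ((\<lambda>k. norm (z - Orb k)) ` {..<p})"

definition class_Kinf :: "(real \<Rightarrow> real) \<Rightarrow> bool" where
  "class_Kinf a \<longleftrightarrow> a 0 = 0 \<and> continuous_on {0..} a \<and> strict_mono_on {0..} a
     \<and> filterlim a at_top at_top"

end

theory Submission
  imports Defs
begin

text \<open>On the optimal orbit the dissipation inequality is tight: summed over one period the
  storage terms cancel and the average cost is l*, so every nonnegative slack vanishes and
  l(Pi(j)) = l* + lambda(x(j+1)) - lambda(x(j)). A trajectory that stays closer to the orbit than
  a threshold delta, fixed by the separation of the orbit states and the uniform continuity of f,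
  moves from the nearest orbit point to its successor. Hence the costs of the nearest orbit points
  telescope to T l* plus a difference of two storage values on the orbit, and walking around the
  orbit bounds that difference by (p* - 1) l*. The remaining deviation l(z) - l(Pi(j)) is controlled
  by a K-infinity modulus of continuity of l on the compact set X x U; it is built as an infimum of
  affine functions c n + n s and made to dominate max l beyond delta, which settles large eps.\<close>

definition affine_inf :: "(nat \<Rightarrow> real) \<Rightarrow> real \<Rightarrow> real" where
  "affine_inf c s = (INF n. c n + real n * s)"

lemma affine_inf_le:
  assumes "\<And>n. 0 \<le> c n" and "0 \<le> s"
  shows "affine_inf c s \<le> c n + real n * s"
  unfolding affine_inf_def
  by (rule cINF_lower) (use assms in \<open>auto intro!: bdd_belowI[of _ 0]\<close>)

lemma affine_inf_greatest:
  assumes "\<And>n. t \<le> c n + real n * s"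
  shows "t \<le> affine_inf c s"
  unfolding affine_inf_def by (rule cINF_greatest) (use assms in auto)

lemma affine_inf_nonneg:
  assumes "\<And>n. 0 \<le> c n" and "0 \<le> s"
  shows "0 \<le> affine_inf c s"
  by (rule affine_inf_greatest) (use assms in auto)

lemma affine_inf_mono:
  assumes "\<And>n. 0 \<le> c n" and "0 \<le> s" and "s \<le> t"
  shows "affine_inf c s \<le> affine_inf c t"
proof (rule affine_inf_greatest)
  fix n
  have "affine_inf c s \<le> c n + real n * s" using assms by (intro affine_inf_le)
  also have "\<dots> \<le> c n + real n * t" using assms by (simp add: mult_left_mono)
  finally show "affine_inf c s \<le> c n + real n * t" .
qed

lemma concave_on_affine_inf:
  assumes "\<And>n. 0 \<le> c n"
  shows "concave_on {0..} (affine_inf c)"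
  unfolding concave_on_iff
proof (intro conjI ballI allI impI)
  fix x y u v :: real
  assume xy: "x \<in> {0..}" "y \<in> {0..}" and uv: "0 \<le> u" "0 \<le> v" "u + v = 1"
  show "u * affine_inf c x + v * affine_inf c y \<le> affine_inf c (u *\<^sub>R x + v *\<^sub>R y)"
  proof (rule affine_inf_greatest)
    fix n
    have "u * affine_inf c x \<le> u * (c n + real n * x)"
      using assms xy uv by (intro mult_left_mono affine_inf_le) auto
    moreover have "v * affine_inf c y \<le> v * (c n + real n * y)"
      using assms xy uv by (intro mult_left_mono affine_inf_le) auto
    moreover have "u * (c n + real n * x) + v * (c n + real n * y)
        = (u + v) * c n + real n * (u *\<^sub>R x + v *\<^sub>R y)"
      by (simp add: algebra_simps)
    ultimately show "u * affine_inf c x + v * affine_inf c y \<le> c n + real n * (u *\<^sub>R x + v *\<^sub>R y)"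
      using uv(3) by simp
  qed
qed simp

lemma affine_inf_tendsto_zero:
  assumes "\<And>n. 0 \<le> c n" and "\<And>e. 0 < e \<Longrightarrow> \<exists>n. c n \<le> e"
  shows "(affine_inf c \<longlongrightarrow> 0) (at_right 0)"
proof (rule tendstoI)
  fix e :: real assume "0 < e"
  then obtain n where "c n \<le> e / 2" using assms(2)[of "e / 2"] by auto
  with \<open>0 < e\<close> have n: "c n < e" by linarith
  have "\<forall>\<^sub>F s in at_right 0. c n + real n * s < e"
    using n by (intro order_tendstoD(2)[of _ "c n"]) (auto intro!: tendsto_eq_intros)
  moreover have "\<forall>\<^sub>F s in at_right 0. 0 < (s::real)" by (simp add: eventually_at_right_less)
  ultimately show "\<forall>\<^sub>F s in at_right 0. dist (affine_inf c s) 0 < e"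
  proof eventually_elim
    case (elim s)
    then have "0 \<le> affine_inf c s" "affine_inf c s \<le> c n + real n * s"
      by (simp_all add: assms(1) affine_inf_nonneg affine_inf_le)
    with elim show ?case by (simp add: dist_real_def)
  qed
qed

lemma affine_inf_zero:
  assumes "\<And>n. 0 \<le> c n" and "\<And>e. 0 < e \<Longrightarrow> \<exists>n. c n \<le> e"
  shows "affine_inf c 0 = 0"
proof (rule antisym)
  show "affine_inf c 0 \<le> 0"
  proof (rule field_le_epsilon)
    fix e :: real assume "0 < e"
    then obtain n where "c n \<le> e" using assms(2) by blast
    then show "affine_inf c 0 \<le> 0 + e" using affine_inf_le[of c 0 n] assms(1) by simp
  qed
qed (simp add: assms(1) affine_inf_nonneg)

lemma continuous_on_affine_inf:
  assumes "\<And>n. 0 \<le> c n" and "\<And>e. 0 < e \<Longrightarrow> \<exists>n. c n \<le> e"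
  shows "continuous_on {0..} (affine_inf c)"
  unfolding continuous_on_eq_continuous_within
proof
  fix s :: real assume "s \<in> {0..}"
  show "continuous (at s within {0..}) (affine_inf c)"
  proof (cases "s = 0")
    case True
    then show ?thesis
      using affine_inf_tendsto_zero[OF assms] affine_inf_zero[OF assms]
      by (simp add: continuous_within at_within_Ici_at_right)
  next
    case False
    have "convex_on {0<..} (\<lambda>s. - affine_inf c s)"
      using concave_on_affine_inf[OF assms(1)] unfolding concave_on_def
      by (rule convex_on_subset) auto
    then have "continuous_on {0<..} (\<lambda>s. - (- affine_inf c s))"
      by (intro continuous_on_minus convex_on_continuous) auto
    then have "continuous (at s) (affine_inf c)"
      using False \<open>s \<in> {0..}\<close> by (simp add: continuous_on_eq_continuous_at)
    then show ?thesis by (rule continuous_at_imp_continuous_within)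
  qed
qed

lemma class_Kinf_affine_inf_plus_ident:
  assumes "\<And>n. 0 \<le> c n" and "\<And>e. 0 < e \<Longrightarrow> \<exists>n. c n \<le> e"
  shows "class_Kinf (\<lambda>s. affine_inf c s + s)"
  unfolding class_Kinf_def
proof (intro conjI)
  show "affine_inf c 0 + 0 = 0" using affine_inf_zero[OF assms] by simp
  show "continuous_on {0..} (\<lambda>s. affine_inf c s + s)"
    by (intro continuous_intros continuous_on_affine_inf assms)
  show "strict_mono_on {0..} (\<lambda>s. affine_inf c s + s)"
    by (rule strict_mono_onI) (use assms(1) affine_inf_mono in \<open>auto intro: add_le_less_mono\<close>)
  show "filterlim (\<lambda>s. affine_inf c s + s) at_top at_top"
    by (rule filterlim_at_top_mono[OF filterlim_ident])
      (auto simp: eventually_at_top_linorder assms(1) affine_inf_nonneg intro: exI[of _ 0])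
qed

lemma Kinf_majorant:
  fixes P :: "(real \<times> real) set"
  assumes bounded: "\<And>s v. (s, v) \<in> P \<Longrightarrow> 0 \<le> s \<and> v \<le> M"
    and vanishing: "\<And>e. 0 < e \<Longrightarrow> \<exists>d>0. \<forall>(s, v)\<in>P. s < d \<longrightarrow> v \<le> e"
  shows "\<exists>\<alpha>. class_Kinf \<alpha> \<and> (\<forall>(s, v)\<in>P. v \<le> \<alpha> s)"
proof -
  define A where "A n = insert 0 {v - real n * s | s v. (s, v) \<in> P}" for n
  define c where "c n = Sup (A n)" for n
  have A_le: "x \<le> b" if "x \<in> A n" "0 \<le> b" "\<And>s v. (s, v) \<in> P \<Longrightarrow> v - real n * s \<le> b"
    for x b n
    using that unfolding A_def by blast
  have bdd: "bdd_above (A n)" for n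
  proof (rule bdd_aboveI)
    fix x assume "x \<in> A n"
    then show "x \<le> max 0 M"
    proof (rule A_le)
      fix s v assume "(s, v) \<in> P"
      with bounded have "0 \<le> real n * s" "v \<le> M" by auto
      then show "v - real n * s \<le> max 0 M" by linarith
    qed simp
  qed
  have c_nonneg: "0 \<le> c n" for n
    unfolding c_def by (rule cSup_upper[OF _ bdd]) (simp add: A_def)
  have c_upper: "v - real n * s \<le> c n" if "(s, v) \<in> P" for s v n
    unfolding c_def by (rule cSup_upper[OF _ bdd]) (use that in \<open>auto simp: A_def\<close>)
  have c_vanish: "\<exists>n. c n \<le> e" if "0 < e" for e
  proof -
    obtain d where "0 < d" and d: "\<forall>(s, v)\<in>P. s < d \<longrightarrow> v \<le> e"
      using vanishing \<open>0 < e\<close> by blast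
    obtain n where n: "M / d < real n" using reals_Archimedean2 by blast
    have "v - real n * s \<le> e" if "(s, v) \<in> P" for s v
    proof (cases "s < d")
      case True
      then have "v \<le> e" using d that by blast
      moreover have "0 \<le> real n * s" using bounded[OF that] by simp
      ultimately show ?thesis by linarith
    next
      case False
      have "M < real n * d" using n \<open>0 < d\<close> by (simp add: field_simps)
      also have "\<dots> \<le> real n * s" using False by (simp add: mult_left_mono)
      finally show ?thesis using bounded[OF that] \<open>0 < e\<close> by linarith
    qed
    then have "c n \<le> e"
      unfolding c_def using \<open>0 < e\<close> by (intro cSup_least) (auto simp: A_def intro: A_le)
    then show ?thesis ..
  qed
  have "v \<le> affine_inf c s + s" if "(s, v) \<in> P" for s v
  proof -
    have "v \<le> affine_inf c s"
      by (rule affine_inf_greatest) (use c_upper[OF that] in \<open>simp add: algebra_simps\<close>)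
    then show ?thesis using bounded[OF that] by simp
  qed
  then show ?thesis
    using class_Kinf_affine_inf_plus_ident[OF c_nonneg c_vanish] by blast
qed

lemma Kinf_modulus_of_continuity:
  fixes L :: "'a::metric_space \<Rightarrow> real"
  assumes "compact K" and "continuous_on K L" and "0 < \<delta>"
  shows "\<exists>\<alpha>. class_Kinf \<alpha> \<and> (\<forall>z\<in>K. \<forall>y\<in>K. \<forall>s. dist z y \<le> s \<longrightarrow> L z \<le> L y + \<alpha> s)
    \<and> (\<forall>z\<in>K. \<forall>s\<ge>\<delta>. L z \<le> \<alpha> s)"
proof -
  obtain B where "0 < B" and B: "\<And>z. z \<in> K \<Longrightarrow> \<bar>L z\<bar> \<le> B"
    using compact_imp_bounded[OF compact_continuous_image[OF assms(2,1)]]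
    unfolding bounded_pos by auto
  have osc: "L z - L y \<le> 2 * B" if "z \<in> K" "y \<in> K" for z y
    using B[OF that(1)] B[OF that(2)] by (simp add: abs_le_iff)
  have uc: "uniformly_continuous_on K L"
    using assms(2,1) by (rule compact_uniformly_continuous)
  define P where "P = {(s, L z - L y) | s z y. z \<in> K \<and> y \<in> K \<and> dist z y \<le> s}
    \<union> {(s, B) | s. \<delta> \<le> s}"
  have "\<exists>\<alpha>. class_Kinf \<alpha> \<and> (\<forall>(s, v)\<in>P. v \<le> \<alpha> s)"
  proof (rule Kinf_majorant)
    show "0 \<le> s \<and> v \<le> 2 * B" if "(s, v) \<in> P" for s v
      using that osc \<open>0 < B\<close> \<open>0 < \<delta>\<close> unfolding P_def
      by (auto intro: order_trans[OF zero_le_dist])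
    fix e :: real assume "0 < e"
    then obtain d where "0 < d"
      and d: "\<And>z y. z \<in> K \<Longrightarrow> y \<in> K \<Longrightarrow> dist z y < d \<Longrightarrow> L z - L y < e"
      using uc unfolding uniformly_continuous_on_def dist_real_def by (metis abs_less_iff)
    have "v \<le> e" if "(s, v) \<in> P" and "s < min d \<delta>" for s v
    proof -
      from that obtain z y where "z \<in> K" "y \<in> K" "dist z y \<le> s" "v = L z - L y"
        unfolding P_def by auto
      then show ?thesis using d[of z y] that(2) by simp
    qed
    then show "\<exists>d>0. \<forall>(s, v)\<in>P. s < d \<longrightarrow> v \<le> e"
      using \<open>0 < d\<close> \<open>0 < \<delta>\<close> by (intro exI[of _ "min d \<delta>"]) auto
  qed
  then obtain \<alpha> where "class_Kinf \<alpha>" and \<alpha>: "\<And>s v. (s, v) \<in> P \<Longrightarrow> v \<le> \<alpha> s"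
    by blast
  moreover have "L z \<le> L y + \<alpha> s" if "z \<in> K" "y \<in> K" "dist z y \<le> s" for z y s
  proof -
    have "(s, L z - L y) \<in> P" unfolding P_def using that by blast
    from \<alpha>[OF this] show ?thesis by simp
  qed
  moreover have "L z \<le> \<alpha> s" if "z \<in> K" "\<delta> \<le> s" for z s
    using \<alpha>[of s B] B[OF that(1)] that unfolding P_def by (auto simp: abs_le_iff)
  ultimately show ?thesis by blast
qed

lemma sum_lessThan_Suc_mod:
  fixes g :: "nat \<Rightarrow> 'a::comm_monoid_add"
  assumes "0 < p"
  shows "(\<Sum>j<p. g (Suc j mod p)) = (\<Sum>j<p. g j)"
proof -
  obtain q where q: "p = Suc q" using assms by (cases p) auto
  have "(\<Sum>j<Suc q. g (Suc j mod Suc q)) = (\<Sum>j<q. g (Suc j mod Suc q)) + g 0"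
    by simp
  also have "(\<Sum>j<q. g (Suc j mod Suc q)) = (\<Sum>j<q. g (Suc j))"
    by (rule sum.cong) auto
  also have "(\<Sum>j<q. g (Suc j)) + g 0 = (\<Sum>j<Suc q. g j)"
    unfolding sum.lessThan_Suc_shift by (simp add: add.commute)
  finally show ?thesis using q by simp
qed

lemma sum_lessThan_telescope_chain:
  fixes A B :: "nat \<Rightarrow> 'a::ab_group_add"
  assumes "\<forall>k<n. A k = B (Suc k)"
  shows "(\<Sum>k<Suc n. A k - B k) = A n - B 0"
  using assms by (induction n) auto

lemma cyclic_dissipation_tight:
  fixes c s :: "nat \<Rightarrow> real"
  assumes "0 < p" and "(\<Sum>j<p. c j) = real p * e"
    and "\<forall>j<p. 0 \<le> c j - e + s j - s (Suc j mod p)"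
  shows "\<forall>j<p. c j = e + s (Suc j mod p) - s j"
proof -
  have "(\<Sum>j<p. c j - e + s j - s (Suc j mod p)) = 0"
    using assms(2) sum_lessThan_Suc_mod[OF assms(1), of s]
    by (simp add: sum.distrib sum_subtractf)
  then have "\<forall>j\<in>{..<p}. c j - e + s j - s (Suc j mod p) = 0"
    using assms(3) by (subst (asm) sum_nonneg_eq_0_iff) auto
  then show ?thesis by (simp add: algebra_simps)
qed

lemma cyclic_potential_diff_le:
  fixes c s :: "nat \<Rightarrow> real"
  assumes "0 \<le> e" and "\<forall>j<p. 0 \<le> c j" and balance: "\<forall>j<p. c j = e + s (Suc j mod p) - s j"
    and "a < p" and "b < p"
  shows "s a - s b \<le> (real p - 1) * e"
proof -
  have walk: "(\<Sum>i<m. c ((a + i) mod p)) = real m * e + s ((a + m) mod p) - s a" for m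
  proof (induction m)
    case (Suc m)
    have "c ((a + m) mod p) = e + s ((a + Suc m) mod p) - s ((a + m) mod p)"
      using balance \<open>a < p\<close> by (simp add: mod_Suc_eq)
    with Suc show ?case by (simp add: algebra_simps)
  qed (use \<open>a < p\<close> in simp)
  define m where "m = (b + p - a) mod p"
  have "m < p" and "(a + m) mod p = b"
    using assms(4,5) unfolding m_def by (simp_all add: mod_add_right_eq)
  have "0 \<le> (\<Sum>i<m. c ((a + i) mod p))"
    using assms(2,4) by (intro sum_nonneg) simp
  then have "s a - s b \<le> real m * e" using walk[of m] \<open>(a + m) mod p = b\<close> by simp
  also have "\<dots> \<le> (real p - 1) * e" using \<open>m < p\<close> assms(1) by (intro mult_right_mono) auto
  finally show ?thesis .
qed

lemma cyclic_chain_cost_le: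
  fixes c s :: "nat \<Rightarrow> real" and jf :: "nat \<Rightarrow> nat"
  assumes "0 < p" and "0 \<le> e" and "\<forall>j<p. 0 \<le> c j"
    and balance: "\<forall>j<p. c j = e + s (Suc j mod p) - s j"
    and "\<forall>k<T. jf k < p" and chain: "\<forall>k. Suc k < T \<longrightarrow> s (Suc (jf k) mod p) = s (jf (Suc k))"
  shows "(\<Sum>k<T. c (jf k)) \<le> (real T + real p - 1) * e"
proof (cases T)
  case 0
  then show ?thesis using assms(1,2) by simp
next
  case (Suc n)
  have "(\<Sum>k<T. c (jf k)) = real T * e + (\<Sum>k<Suc n. s (Suc (jf k) mod p) - s (jf k))"
    using balance assms(5) Suc by (simp add: sum.distrib sum_subtractf)
  also have "(\<Sum>k<Suc n. s (Suc (jf k) mod p) - s (jf k)) = s (Suc (jf n) mod p) - s (jf 0)"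
    using chain Suc by (intro sum_lessThan_telescope_chain) simp
  also have "\<dots> \<le> (real p - 1) * e"
    using assms Suc by (intro cyclic_potential_diff_le[of e p c]) auto
  finally show ?thesis by (simp add: algebra_simps)
qed

lemma finite_imp_uniform_discrete: "finite S \<Longrightarrow> uniform_discrete S"
  by (induction rule: finite_induct) (simp_all add: uniform_discrete_insert)

lemma feasible_orbit_period_pos: "feasible_orbit X U f p Orb \<Longrightarrow> 0 < p"
  unfolding feasible_orbit_def by blast

lemma feasible_orbitD:
  assumes "feasible_orbit X U f p Orb" and "j < p"
  shows "Orb j \<in> X \<times> U" and "f (fst (Orb j)) (snd (Orb j)) = fst (Orb (Suc j mod p))"
  using assms unfolding feasible_orbit_def by (auto simp: mem_Times_iff)

lemma orbit_dist_nearest: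
  assumes "0 < p"
  obtains j where "\<And>z. j z < p" and "\<And>z. orbit_dist p Orb z = norm (z - Orb (j z))"
proof -
  have "\<exists>j<p. orbit_dist p Orb z = norm (z - Orb j)" for z
  proof -
    have "orbit_dist p Orb z \<in> (\<lambda>k. norm (z - Orb k)) ` {..<p}"
      unfolding orbit_dist_def using assms by (intro Min_in) auto
    then show ?thesis by auto
  qed
  then show thesis using that by metis
qed

lemma orbit_dist_orbit_point:
  assumes "j < p"
  shows "orbit_dist p Orb (Orb j) = 0"
  unfolding orbit_dist_def using assms by (intro Min_eqI) auto

lemma avg_cost_nonneg:
  assumes "feasible_orbit X U f p Orb" and "\<forall>x\<in>X. \<forall>u\<in>U. 0 \<le> l x u"
  shows "0 \<le> avg_cost l p Orb"
  unfolding avg_cost_def using assms feasible_orbitD(1)[OF assms(1)]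
  by (auto simp: mem_Times_iff intro!: divide_nonneg_nonneg sum_nonneg)

lemma feasible_orbit_tracking:
  fixes f :: "'x::metric_space \<Rightarrow> 'u::metric_space \<Rightarrow> 'x"
  assumes orbit: "feasible_orbit X U f p Orb" and "compact (X \<times> U)"
    and "continuous_on (X \<times> U) (\<lambda>(x, u). f x u)"
  obtains \<delta> where "0 < \<delta>"
    and "\<And>z z' j j'. z \<in> X \<times> U \<Longrightarrow> j < p \<Longrightarrow> j' < p \<Longrightarrow> dist z (Orb j) < \<delta> \<Longrightarrow>
      dist z' (Orb j') < \<delta> \<Longrightarrow> fst z' = f (fst z) (snd z) \<Longrightarrow> fst (Orb (Suc j mod p)) = fst (Orb j')"
proof -
  define S where "S = fst ` Orb ` {..<p}"
  have "uniform_discrete S" unfolding S_def by (intro finite_imp_uniform_discrete) simp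
  then obtain sep where "0 < sep" and sep: "\<And>x y. x \<in> S \<Longrightarrow> y \<in> S \<Longrightarrow> dist x y < sep \<Longrightarrow> x = y"
    unfolding uniform_discrete_def by blast
  have "uniformly_continuous_on (X \<times> U) (\<lambda>z. f (fst z) (snd z))"
    using compact_uniformly_continuous[OF assms(3,2)] by (simp add: case_prod_beta')
  then obtain \<eta> where "0 < \<eta>" and \<eta>: "\<forall>w\<in>X \<times> U. \<forall>z\<in>X \<times> U.
      dist z w < \<eta> \<longrightarrow> dist (f (fst z) (snd z)) (f (fst w) (snd w)) < sep / 2"
    using half_gt_zero[OF \<open>0 < sep\<close>] unfolding uniformly_continuous_on_def by blast
  show thesis
  proof (rule that)
    show "0 < min \<eta> (sep / 2)" using \<open>0 < \<eta>\<close> \<open>0 < sep\<close> by simp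
    fix z z' j j'
    assume z: "z \<in> X \<times> U" and "j < p" "j' < p"
      and near: "dist z (Orb j) < min \<eta> (sep / 2)" "dist z' (Orb j') < min \<eta> (sep / 2)"
      and step: "fst z' = f (fst z) (snd z)"
    have "dist (f (fst z) (snd z)) (f (fst (Orb j)) (snd (Orb j))) < sep / 2"
      using \<eta>[rule_format, OF feasible_orbitD(1)[OF orbit \<open>j < p\<close>] z] near(1) by simp
    then have "dist (fst (Orb (Suc j mod p))) (fst z') < sep / 2"
      using step feasible_orbitD(2)[OF orbit \<open>j < p\<close>] by (simp add: dist_commute)
    moreover have "dist (fst (Orb j')) (fst z') < sep / 2"
      using dist_fst_le[of "Orb j'" z'] dist_commute[of z' "Orb j'"] near(2) by linarith
    ultimately have "dist (fst (Orb (Suc j mod p))) (fst (Orb j')) < sep"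
      by (rule dist_triangle_half_l)
    moreover have "fst (Orb (Suc j mod p)) \<in> S" "fst (Orb j') \<in> S"
      using \<open>j < p\<close> \<open>j' < p\<close> unfolding S_def by auto
    ultimately show "fst (Orb (Suc j mod p)) = fst (Orb j')" by (intro sep)
  qed
qed

lemma optimal_orbit_cost_balance:
  fixes X :: "'x::real_normed_vector set" and U :: "'u::real_normed_vector set"
  assumes orbit: "feasible_orbit X U f p Orb" and avg: "avg_cost l p Orb = e"
    and "\<alpha> 0 = 0"
    and dissip: "\<forall>x\<in>X. \<forall>u\<in>U. f x u \<in> X \<longrightarrow>
      l x u - e + lam x - lam (f x u) \<ge> \<alpha> (orbit_dist p Orb (x, u))"
  shows "\<forall>j<p. l (fst (Orb j)) (snd (Orb j)) = e + lam (fst (Orb (Suc j mod p))) - lam (fst (Orb j))"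
proof (rule cyclic_dissipation_tight)
  show p0: "0 < p" using orbit by (rule feasible_orbit_period_pos)
  show "(\<Sum>j<p. l (fst (Orb j)) (snd (Orb j))) = real p * e"
    using avg p0 unfolding avg_cost_def by (simp add: field_simps)
  show "\<forall>j<p. 0 \<le> l (fst (Orb j)) (snd (Orb j)) - e + lam (fst (Orb j)) - lam (fst (Orb (Suc j mod p)))"
  proof (intro allI impI)
    fix j assume "j < p"
    have "Suc j mod p < p" using p0 by simp
    then have "f (fst (Orb j)) (snd (Orb j)) \<in> X"
      using feasible_orbitD[OF orbit] \<open>j < p\<close> by (auto simp: mem_Times_iff)
    moreover have "fst (Orb j) \<in> X" "snd (Orb j) \<in> U"
      using feasible_orbitD(1)[OF orbit \<open>j < p\<close>] by (auto simp: mem_Times_iff)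
    ultimately have "\<alpha> (orbit_dist p Orb (fst (Orb j), snd (Orb j)))
        \<le> l (fst (Orb j)) (snd (Orb j)) - e + lam (fst (Orb j)) - lam (f (fst (Orb j)) (snd (Orb j)))"
      using dissip by blast
    then show "0 \<le> l (fst (Orb j)) (snd (Orb j)) - e + lam (fst (Orb j)) - lam (fst (Orb (Suc j mod p)))"
      using feasible_orbitD(2)[OF orbit \<open>j < p\<close>] orbit_dist_orbit_point[OF \<open>j < p\<close>, of Orb]
        \<open>\<alpha> 0 = 0\<close> by simp
  qed
qed

lemma tracked_trajectory_cost_le:
  fixes X :: "'x::real_normed_vector set" and U :: "'u::real_normed_vector set"
    and z :: "nat \<Rightarrow> 'x \<times> 'u"
  assumes orbit: "feasible_orbit X U f p Orb"
    and balance: "\<forall>j<p. l (fst (Orb j)) (snd (Orb j))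
      = e + lam (fst (Orb (Suc j mod p))) - lam (fst (Orb j))"
    and "0 \<le> e" and l_nonneg: "\<forall>x\<in>X. \<forall>u\<in>U. 0 \<le> l x u"
    and tracking: "\<And>z z' j j'. z \<in> X \<times> U \<Longrightarrow> j < p \<Longrightarrow> j' < p \<Longrightarrow> dist z (Orb j) < \<delta> \<Longrightarrow>
      dist z' (Orb j') < \<delta> \<Longrightarrow> fst z' = f (fst z) (snd z) \<Longrightarrow> fst (Orb (Suc j mod p)) = fst (Orb j')"
    and near: "\<forall>z\<in>X \<times> U. \<forall>y\<in>X \<times> U. \<forall>s. dist z y \<le> s \<longrightarrow>
      l (fst z) (snd z) \<le> l (fst y) (snd y) + \<alpha> s"
    and z_in: "\<forall>k<T. z k \<in> X \<times> U"
    and z_step: "\<forall>k. Suc k < T \<longrightarrow> fst (z (Suc k)) = f (fst (z k)) (snd (z k))"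
    and close: "\<forall>k<T. orbit_dist p Orb (z k) \<le> \<epsilon>" and "\<epsilon> < \<delta>"
  shows "(\<Sum>k<T. l (fst (z k)) (snd (z k))) \<le> (real T + real p - 1) * e + real T * \<alpha> \<epsilon>"
proof -
  have p0: "0 < p" using orbit by (rule feasible_orbit_period_pos)
  obtain jn where jn: "\<And>w. jn w < p" "\<And>w. orbit_dist p Orb w = norm (w - Orb (jn w))"
    using orbit_dist_nearest[OF p0] by blast
  define jf where "jf k = jn (z k)" for k
  define c where "c j = l (fst (Orb j)) (snd (Orb j))" for j
  have dist_jf: "dist (z k) (Orb (jf k)) \<le> \<epsilon>" if "k < T" for k
    using close[rule_format, OF that] jn(2)[of "z k"] by (simp add: jf_def dist_norm)
  have "(\<Sum>k<T. l (fst (z k)) (snd (z k))) \<le> (\<Sum>k<T. c (jf k) + \<alpha> \<epsilon>)"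
  proof (rule sum_mono)
    fix k assume "k \<in> {..<T}"
    then have "k < T" by simp
    have "Orb (jf k) \<in> X \<times> U" using feasible_orbitD(1)[OF orbit jn(1)] by (simp add: jf_def)
    from near[rule_format, OF z_in[rule_format, OF \<open>k < T\<close>] this dist_jf[OF \<open>k < T\<close>]]
    show "l (fst (z k)) (snd (z k)) \<le> c (jf k) + \<alpha> \<epsilon>" by (simp add: c_def)
  qed
  also have "\<dots> = (\<Sum>k<T. c (jf k)) + real T * \<alpha> \<epsilon>" by (simp add: sum.distrib)
  also have "(\<Sum>k<T. c (jf k)) \<le> (real T + real p - 1) * e"
  proof (rule cyclic_chain_cost_le[where c = c and jf = jf and s = "\<lambda>j. lam (fst (Orb j))",
        OF p0 \<open>0 \<le> e\<close>])
    show "\<forall>j<p. 0 \<le> c j"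
      using l_nonneg feasible_orbitD(1)[OF orbit] by (auto simp: c_def mem_Times_iff)
    show "\<forall>j<p. c j = e + lam (fst (Orb (Suc j mod p))) - lam (fst (Orb j))"
      using balance by (simp add: c_def)
    show "\<forall>k<T. jf k < p" using jn(1) by (simp add: jf_def)
    show "\<forall>k. Suc k < T \<longrightarrow> lam (fst (Orb (Suc (jf k) mod p))) = lam (fst (Orb (jf (Suc k))))"
    proof (intro allI impI)
      fix k assume "Suc k < T"
      then have "fst (Orb (Suc (jf k) mod p)) = fst (Orb (jf (Suc k)))"
        using \<open>\<epsilon> < \<delta>\<close> dist_jf[of k] dist_jf[of "Suc k"] z_in z_step
        by (intro tracking[of "z k" _ _ "z (Suc k)"]) (auto simp: jf_def jn(1))
      then show "lam (fst (Orb (Suc (jf k) mod p))) = lam (fst (Orb (jf (Suc k))))" by simp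
    qed
  qed
  finally show ?thesis by simp
qed

theorem lemma26:
  fixes X :: "'x::real_normed_vector set" and U :: "'u::real_normed_vector set"
    and f :: "'x \<Rightarrow> 'u \<Rightarrow> 'x" and l :: "'x \<Rightarrow> 'u \<Rightarrow> real"
    and Pis :: "nat \<Rightarrow> 'x \<times> 'u" and ps :: nat
    and lam :: "'x \<Rightarrow> real" and alpha :: "real \<Rightarrow> real"
  assumes cont_f: "continuous_on (X \<times> U) (\<lambda>(x, u). f x u)"
    and cont_l: "continuous_on (X \<times> U) (\<lambda>(x, u). l x u)"
    and cpt: "compact (X \<times> U)"
    and l_nonneg: "\<forall>x\<in>X. \<forall>u\<in>U. 0 \<le> l x u"
    and orbit: "feasible_orbit X U f ps Pis"
    and optimal: "avg_cost l ps Pis = ell_star X U f l"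
    and lam_bdd: "bounded (lam ` X)"
    and alpha_K: "class_Kinf alpha"
    and dissip: "\<forall>x\<in>X. \<forall>u\<in>U. f x u \<in> X \<longrightarrow>
        l x u - ell_star X U f l + lam x - lam (f x u) \<ge> alpha (orbit_dist ps Pis (x, u))"
  shows "\<exists>alpha1. class_Kinf alpha1 \<and>
    (\<forall>eps>0. \<forall>T xh uh. xh \<in> X \<longrightarrow> uh \<in> feasible_inputs X U f T xh \<longrightarrow>
       (\<forall>k<T. orbit_dist ps Pis (traj f uh xh k, uh k) \<le> eps) \<longrightarrow>
       (\<Sum>k<T. l (traj f uh xh k) (uh k))
         \<le> (real T + real ps - 1) * ell_star X U f l + real T * alpha1 eps)"
proof -
  have "0 < ps" using orbit by (rule feasible_orbit_period_pos)
  have "0 \<le> ell_star X U f l" using avg_cost_nonneg[OF orbit l_nonneg] optimal by simp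
  have balance: "\<forall>j<ps. l (fst (Pis j)) (snd (Pis j))
      = ell_star X U f l + lam (fst (Pis (Suc j mod ps))) - lam (fst (Pis j))"
    using optimal_orbit_cost_balance[OF orbit optimal _ dissip] alpha_K by (simp add: class_Kinf_def)
  obtain \<delta> where "0 < \<delta>" and tracking: "\<And>z z' j j'. z \<in> X \<times> U \<Longrightarrow> j < ps \<Longrightarrow> j' < ps \<Longrightarrow>
      dist z (Pis j) < \<delta> \<Longrightarrow> dist z' (Pis j') < \<delta> \<Longrightarrow> fst z' = f (fst z) (snd z) \<Longrightarrow>
      fst (Pis (Suc j mod ps)) = fst (Pis j')"
    using feasible_orbit_tracking[OF orbit cpt cont_f] by blast
  obtain alpha1 where "class_Kinf alpha1"
    and near: "\<forall>z\<in>X \<times> U. \<forall>y\<in>X \<times> U. \<forall>s. dist z y \<le> s \<longrightarrow>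
      l (fst z) (snd z) \<le> l (fst y) (snd y) + alpha1 s"
    and far: "\<forall>z\<in>X \<times> U. \<forall>s\<ge>\<delta>. l (fst z) (snd z) \<le> alpha1 s"
    using Kinf_modulus_of_continuity[OF cpt cont_l \<open>0 < \<delta>\<close>] unfolding case_prod_beta by blast
  show ?thesis
  proof (intro exI[of _ alpha1] conjI allI impI)
    show "class_Kinf alpha1" by fact
    fix eps :: real and T xh uh
    assume "0 < eps" "xh \<in> X" and uh: "uh \<in> feasible_inputs X U f T xh"
      and close: "\<forall>k<T. orbit_dist ps Pis (traj f uh xh k, uh k) \<le> eps"
    define z where "z k = (traj f uh xh k, uh k)" for k
    have z_in: "\<forall>k<T. z k \<in> X \<times> U" using uh unfolding feasible_inputs_def z_def by auto
    show "(\<Sum>k<T. l (traj f uh xh k) (uh k))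
        \<le> (real T + real ps - 1) * ell_star X U f l + real T * alpha1 eps"
    proof (cases "\<delta> \<le> eps")
      case True
      have "(\<Sum>k<T. l (traj f uh xh k) (uh k)) \<le> (\<Sum>k<T. alpha1 eps)"
        using far z_in True by (intro sum_mono) (simp add: z_def)
      moreover have "0 \<le> (real T + real ps - 1) * ell_star X U f l"
        using \<open>0 < ps\<close> \<open>0 \<le> ell_star X U f l\<close> by simp
      ultimately show ?thesis by simp
    next
      case False
      then show ?thesis
        using tracked_trajectory_cost_le[OF orbit balance \<open>0 \<le> ell_star X U f l\<close> l_nonneg
            tracking near z_in _ close[folded z_def]] by (simp add: z_def)
    qed
  qed
qed

end
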